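(* (a) Let $p,q>0$ and $a_k=e^{pk^q}$, $k\ge1$; then $\lim_{N\to\infty}E[U_j^N]=I(\alpha;j)<\infty$ for all $j\ge2$. (b) The same holds for $a_k=k!$, $k\ge1$. (c) For $p>0$ and the decaying sequence $b_k=e^{-pk}$, $k\ge1$, the limit $\lim_{N\to\infty}E[U_j^N]$ exists and is finite for all $j\ge2$, and equals $I(\alpha;j)$ with $\alpha=\{e^{pk}\}_{k\ge1}$.
   Context: For a positive sequence $\{c_k\}$ and $N\ge2$, coupon type $k\in\{1,\dots,N\}$ has probability $c_k/\sum_{i=1}^Nc_i$; $U_j^N$ is the number of empty album places of the $j$-th collector when the first collector completes her set (each collector passes duplicates to the next one), with $$E[U_j^N]=\sum_{k=1}^N\int_0^\infty c_k e^{-c_k t}\frac{(c_kt)^{j-1}}{(j-1)!}\prod_{i\ne k,\,1\le i\le N}\big(1-e^{-c_i t}\big)\,dt.$$ For a positive sequence $\alpha=\{a_k\}$: $x_\alpha:=\inf\{x\in[0,1]:\sum_k x^{a_k}=\infty\}$, $L(x;\alpha;j):=\sum_{k}a_k^j\frac{x^{a_k}}{1-x^{a_k}}$, $F(x;\alpha):=\prod_{k}(1-x^{a_k})$, $I(\alpha;j):=\frac{1}{(j-1)!}\int_0^{x_\alpha}L(x;\alpha;j)F(x;\alpha)|\ln x|^{j-1}\frac{dx}{x}$. *)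

theory Defs
  imports "HOL-Analysis.Analysis"
begin

text \<open>Sequences are functions nat => real; only the values at k >= 1 are used.\<close>

text \<open>Expected number of empty places E[U_j^N] of the j-th collector, for coupon weights c_1..c_N.\<close>
definition EU :: "(nat \<Rightarrow> real) \<Rightarrow> nat \<Rightarrow> nat \<Rightarrow> real" where
  "EU c N j = (\<Sum>k\<in>{1..N}. (LINT t:{0..}|lborel.
      c k * exp (- c k * t) * (c k * t) ^ (j - 1) / fact (j - 1) *
      (\<Prod>i\<in>{1..N} - {k}. 1 - exp (- c i * t))))"

definition x_alpha :: "(nat \<Rightarrow> real) \<Rightarrow> real" where
  "x_alpha a = Inf {x \<in> {0..1}. \<not> summable (\<lambda>k. x powr a (Suc k))}"

definition L_fun :: "real \<Rightarrow> (nat \<Rightarrow> real) \<Rightarrow> nat \<Rightarrow> real" where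
  "L_fun x a j = (\<Sum>k. a (Suc k) ^ j * x powr a (Suc k) / (1 - x powr a (Suc k)))"

definition F_fun :: "real \<Rightarrow> (nat \<Rightarrow> real) \<Rightarrow> real" where
  "F_fun x a = prodinf (\<lambda>k. 1 - x powr a (Suc k))"

definition I_integrand :: "(nat \<Rightarrow> real) \<Rightarrow> nat \<Rightarrow> real \<Rightarrow> real" where
  "I_integrand a j x = L_fun x a j * F_fun x a * \<bar>ln x\<bar> ^ (j - 1) / x"

definition I_fun :: "(nat \<Rightarrow> real) \<Rightarrow> nat \<Rightarrow> real" where
  "I_fun a j = (1 / fact (j - 1)) * (LINT x:{0<..<x_alpha a}|lborel. I_integrand a j x)"

text \<open>I(alpha;j) is finite: the (nonnegative) integrand is Lebesgue integrable on (0, x_alpha).\<close>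
definition I_finite :: "(nat \<Rightarrow> real) \<Rightarrow> nat \<Rightarrow> bool" where
  "I_finite a j = set_integrable lborel {0<..<x_alpha a} (I_integrand a j)"

end

theory Submission
  imports Defs "HOL-Probability.Distributions" "HOL-Real_Asymp.Real_Asymp"
begin

text \<open>
  E[U_j^N] is the integral over t \<ge> 0 of
  f_N(t) = \<Sum>_k erl_{j-1,c_k}(t) \<Prod>_{i\<noteq>k} (1 - exp(-c_i t)),
  with erl the Erlang density (of shape j and rate c_k), and the substitution x = exp(-t) turns f_N into the N-th
  truncation of the integrand of I(\<alpha>;j). Pointwise convergence is therefore clear and the
  point is domination. Dropping the factors with i > k gives the N-independent bound
  \<Sum>_k erl_{j-1,c_k}(t) \<Prod>_{i<k} (1 - exp(-c_i t)); with 1 - exp(-c_i t) \<le> c_i t the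
  (m+1)-st term has integral at most c_1\<cdots>c_m (j-1+m)! / ((j-1)! c_{m+1}^m), and the ratio of
  consecutive bounds is (j+m) (c_{m+1}/c_{m+2})^{m+1}. So dominated convergence applies whenever
  \<Sum> 1/c_k < \<infinity> and (j+k) (c_k/c_{k+1})^k \<rightarrow> 0, which holds for exp(p k^q) and k!;
  the first condition also forces x_\<alpha> = 1.

  For the decaying weights exp(-pk) one uses that E[U_j^N] is invariant under scaling all
  weights and under reversing their order, which turns them into exp(pk).
\<close>

lemma power_div_fact_le_exp:
  fixes x :: real assumes "0 \<le> x" shows "x ^ n / fact n \<le> exp x"
proof -
  have "(\<Sum>i\<in>{n}. x ^ i /\<^sub>R fact i) \<le> (\<Sum>i. x ^ i /\<^sub>R fact i)"
    by (rule sum_le_suminf[OF summable_exp_generic]) (use assms in auto)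
  thus ?thesis by (simp add: exp_def divide_inverse mult.commute)
qed

lemma power_mult_exp_neg_le:
  fixes c t :: real assumes c: "0 < c" and t: "0 < t"
  shows "c ^ m * exp (- c * t) \<le> fact (Suc m) / t ^ Suc m * (1 / c)"
proof -
  have "(c * t) ^ Suc m \<le> fact (Suc m) * exp (c * t)"
    using power_div_fact_le_exp[of "c * t" "Suc m"] c t by (simp add: divide_le_eq mult.commute)
  hence "c ^ Suc m * t ^ Suc m * exp (- c * t) \<le> fact (Suc m) * exp (c * t) * exp (- c * t)"
    by (intro mult_right_mono) (simp_all add: power_mult_distrib mult_ac)
  also have "\<dots> = fact (Suc m)" by (simp add: exp_minus field_simps)
  finally show ?thesis using c t by (simp add: field_simps)
qed

lemma summable_power_mult_exp_neg:
  fixes c :: "nat \<Rightarrow> real"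
  assumes pos: "\<And>k. 0 < c k" and summable: "summable (\<lambda>k. 1 / c k)" and t: "0 < t"
  shows "summable (\<lambda>k. c k ^ m * exp (- c k * t))"
proof (rule summable_comparison_test')
  show "summable (\<lambda>k. fact (Suc m) / t ^ Suc m * (1 / c k))"
    by (intro summable_mult summable)
  show "norm (c k ^ m * exp (- c k * t)) \<le> fact (Suc m) / t ^ Suc m * (1 / c k)" for k
    using power_mult_exp_neg_le[OF pos t, of k m] pos[of k] by simp
qed

lemma one_minus_exp_neg_le: "0 \<le> u \<Longrightarrow> 1 - exp (- u) \<le> (u::real)"
  using exp_ge_add_one_self[of "- u"] by simp

lemma inverse_one_minus_exp_neg_le: "0 < u \<Longrightarrow> 1 / (1 - exp (- u)) \<le> (1 + u) / (u::real)"
proof -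
  assume u: "0 < u"
  have "u / (1 + u) \<le> 1 - exp (- u)"
    using exp_ge_add_one_self[of u] u by (simp add: exp_minus field_simps)
  thus ?thesis using u by (simp add: field_simps)
qed

section \<open>The substitution x = exp(-t)\<close>

lemma set_integrable_lborel_iff_lebesgue:
  fixes f :: "real \<Rightarrow> real"
  assumes "(\<lambda>x. indicator S x * f x) \<in> borel_measurable lborel"
  shows "set_integrable lborel S f \<longleftrightarrow> f absolutely_integrable_on S"
    and "(LINT x:S|lborel. f x) = (LINT x:S|lebesgue. f x)"
  using integrable_completion[OF assms] integral_completion[OF assms]
  by (simp_all add: set_integrable_def set_lebesgue_integral_def)

lemma exp_neg_image_greaterThan_0: "(\<lambda>t. exp (- t)) ` {0<..} = {0<..<1::real}"
proof (intro equalityI subsetI)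
  fix x :: real assume "x \<in> {0<..<1}"
  hence "x = exp (- (- ln x))" and "- ln x \<in> {0<..}" by auto
  thus "x \<in> (\<lambda>t. exp (- t)) ` {0<..}" by blast
qed auto

lemma
  fixes f :: "real \<Rightarrow> real"
  assumes f_measurable: "(\<lambda>x. indicator {0<..<1} x * f x) \<in> borel_measurable lborel"
    and integrable: "set_integrable lborel {0<..} (\<lambda>t. exp (- t) * f (exp (- t)))"
  shows set_integrable_exp_neg_subst: "set_integrable lborel {0<..<1} f"
    and set_integral_exp_neg_subst:
      "(LINT x:{0<..<1}|lborel. f x) = (LINT t:{0<..}|lborel. exp (- t) * f (exp (- t)))"
proof -
  let ?F = "\<lambda>t. \<bar>- exp (- t)\<bar> * f (exp (- t))"
  define b where "b = (LINT t:{0<..}|lborel. exp (- t) * f (exp (- t)))"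
  have F_measurable: "(\<lambda>t. indicator {0<..} t * ?F t) \<in> borel_measurable lborel"
    using borel_measurable_integrable[OF integrable[unfolded set_integrable_def]] by simp
  have F_abs: "?F absolutely_integrable_on {0<..}"
    using integrable set_integrable_lborel_iff_lebesgue(1)[OF F_measurable] by simp
  have "integral {0<..} ?F = b"
    using set_lebesgue_integral_eq_integral(2)[OF F_abs] set_integrable_lborel_iff_lebesgue(2)[OF F_measurable]
    by (simp add: b_def)
  moreover have "?F absolutely_integrable_on {0<..} \<and> integral {0<..} ?F = b
      \<longleftrightarrow> f absolutely_integrable_on {0<..<1} \<and> integral {0<..<1} f = b"
    unfolding exp_neg_image_greaterThan_0[symmetric]
    by (rule has_absolute_integral_change_of_variables_1') (auto intro!: derivative_eq_intros simp: inj_on_def)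
  ultimately have f_abs: "f absolutely_integrable_on {0<..<1}" and "integral {0<..<1} f = b"
    using F_abs by simp_all
  thus "set_integrable lborel {0<..<1} f" and "(LINT x:{0<..<1}|lborel. f x) = b"
    using set_integrable_lborel_iff_lebesgue[OF f_measurable] set_lebesgue_integral_eq_integral(2)[OF f_abs]
    by simp_all
qed

section \<open>The density of E[U_j^N] and its limit\<close>

definition EU_density :: "(nat \<Rightarrow> real) \<Rightarrow> nat \<Rightarrow> nat \<Rightarrow> real \<Rightarrow> real" where
  "EU_density c j N t = indicator {0..} t *
     (\<Sum>k\<in>{1..N}. erlang_density (j - 1) (c k) t * (\<Prod>i\<in>{1..N} - {k}. 1 - exp (- c i * t)))"

definition partial_I_integrand :: "(nat \<Rightarrow> real) \<Rightarrow> nat \<Rightarrow> nat \<Rightarrow> real \<Rightarrow> real" where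
  "partial_I_integrand c j N x =
     (\<Sum>k<N. c (Suc k) ^ j * x powr c (Suc k) / (1 - x powr c (Suc k))) *
     (\<Prod>k<N. 1 - x powr c (Suc k)) * \<bar>ln x\<bar> ^ (j - 1) / x"

definition EU_limit_density :: "(nat \<Rightarrow> real) \<Rightarrow> nat \<Rightarrow> real \<Rightarrow> real" where
  "EU_limit_density c j t = indicator {0<..} t * (I_integrand c j (exp (- t)) * exp (- t) / fact (j - 1))"

lemma EU_density_measurable [measurable]: "EU_density c j N \<in> borel_measurable borel"
  unfolding EU_density_def by measurable

lemma partial_I_integrand_measurable [measurable]: "partial_I_integrand c j N \<in> borel_measurable borel"
  unfolding partial_I_integrand_def by measurable

locale coupon_weights =
  fixes c :: "nat \<Rightarrow> real" and j :: nat
  assumes weights_pos: "\<And>k. 0 < c k" and two_le_j: "2 \<le> j"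
begin

lemma erlang_density_eq:
  assumes "0 \<le> t"
  shows "erlang_density (j - 1) l t = l ^ j * t ^ (j - 1) * exp (- l * t) / fact (j - 1)"
proof -
  have "Suc (j - 1) = j" using two_le_j by simp
  thus ?thesis using assms by (simp add: erlang_density_def)
qed

lemma erlang_density_at_0: "erlang_density (j - 1) l 0 = 0"
  using erlang_density_eq[of 0 l] two_le_j by simp

lemma prod_one_minus_exp_neg_bounds:
  assumes "0 \<le> t"
  shows "0 \<le> (\<Prod>i\<in>A. 1 - exp (- c i * t))" and "(\<Prod>i\<in>A. 1 - exp (- c i * t)) \<le> 1"
proof -
  have "0 \<le> 1 - exp (- c i * t) \<and> 1 - exp (- c i * t) \<le> 1" for i
    using weights_pos[of i] assms by auto
  thus "0 \<le> (\<Prod>i\<in>A. 1 - exp (- c i * t))" "(\<Prod>i\<in>A. 1 - exp (- c i * t)) \<le> 1"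
    by (auto intro: prod_nonneg prod_le_1)
qed

lemma integrable_erlang_density: "integrable lborel (erlang_density (j - 1) (c k))"
proof (rule integrableI_nonneg)
  show "AE x in lborel. 0 \<le> erlang_density (j - 1) (c k) x"
    using weights_pos[of k] by (auto intro!: erlang_density_nonneg less_imp_le)
  show "(\<integral>\<^sup>+ x. ennreal (erlang_density (j - 1) (c k) x) \<partial>lborel) < \<infinity>"
    using nn_integral_erlang_ith_moment[OF weights_pos[of k], of "j - 1" 0] by simp
qed simp

lemma EU_eq_integral_EU_density: "EU c N j = integral\<^sup>L lborel (EU_density c j N)"
proof -
  let ?P = "\<lambda>k t. \<Prod>i\<in>{1..N} - {k}. 1 - exp (- c i * t)"
  let ?g = "\<lambda>k t. indicator {0..} t * (erlang_density (j - 1) (c k) t * ?P k t)"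
  have term_eq: "(LINT t:{0..}|lborel. c k * exp (- c k * t) * (c k * t) ^ (j - 1) / fact (j - 1) * ?P k t)
      = integral\<^sup>L lborel (?g k)" for k
    unfolding set_lebesgue_integral_def
  proof (intro Bochner_Integration.integral_cong refl)
    fix t :: real
    have "c k * (c k * t) ^ (j - 1) = c k ^ j * t ^ (j - 1)"
      using two_le_j by (simp add: power_mult_distrib power_Suc[symmetric])
    thus "indicator {0..} t *\<^sub>R (c k * exp (- c k * t) * (c k * t) ^ (j - 1) / fact (j - 1) * ?P k t)
        = ?g k t"
      using erlang_density_eq[of t "c k"] by (cases "0 \<le> t") auto
  qed
  have "integrable lborel (?g k)" for k
  proof (rule Bochner_Integration.integrable_bound[OF integrable_erlang_density[of k]])
    have "norm (?g k t) \<le> norm (erlang_density (j - 1) (c k) t)" for t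
    proof (cases "0 \<le> t")
      case True
      thus ?thesis
        using prod_one_minus_exp_neg_bounds[OF True, of "{1..N} - {k}"] weights_pos[of k]
        by (simp add: abs_mult mult_left_le)
    qed simp
    thus "AE t in lborel. norm (?g k t) \<le> norm (erlang_density (j - 1) (c k) t)" by simp
  qed measurable
  thus ?thesis
    unfolding EU_def EU_density_def term_eq sum_distrib_left
    by (intro Bochner_Integration.integral_sum[symmetric]) simp
qed

lemma EU_density_eq_partial_I_integrand:
  assumes t: "0 < t"
  shows "EU_density c j N t = partial_I_integrand c j N (exp (- t)) * exp (- t) / fact (j - 1)"
proof -
  let ?\<phi> = "\<lambda>k. 1 - exp (- c k * t)"
  have exp_powr: "exp (- t) powr y = exp (- y * t)" for y by (simp add: powr_def)
  have "(\<Sum>k<N. c (Suc k) ^ j * exp (- t) powr c (Suc k) / (1 - exp (- t) powr c (Suc k))) *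
        (\<Prod>k<N. 1 - exp (- t) powr c (Suc k))
      = (\<Sum>k\<in>{1..N}. c k ^ j * exp (- c k * t) / ?\<phi> k) * (\<Prod>k\<in>{1..N}. ?\<phi> k)"
    by (simp add: exp_powr sum.atLeast1_atMost_eq prod.atLeast1_atMost_eq)
  also have "\<dots> = (\<Sum>k\<in>{1..N}. c k ^ j * exp (- c k * t) * (\<Prod>i\<in>{1..N} - {k}. ?\<phi> i))"
    unfolding sum_distrib_right
  proof (rule sum.cong[OF refl])
    fix k assume "k \<in> {1..N}"
    hence "(\<Prod>i\<in>{1..N}. ?\<phi> i) = ?\<phi> k * (\<Prod>i\<in>{1..N} - {k}. ?\<phi> i)"
      by (intro prod.remove) auto
    moreover have "?\<phi> k \<noteq> 0" using weights_pos[of k] t by simp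
    ultimately show "c k ^ j * exp (- c k * t) / ?\<phi> k * (\<Prod>i\<in>{1..N}. ?\<phi> i)
        = c k ^ j * exp (- c k * t) * (\<Prod>i\<in>{1..N} - {k}. ?\<phi> i)" by simp
  qed
  finally have "partial_I_integrand c j N (exp (- t)) =
      (\<Sum>k\<in>{1..N}. c k ^ j * exp (- c k * t) * (\<Prod>i\<in>{1..N} - {k}. ?\<phi> i)) * t ^ (j - 1) / exp (- t)"
    using t by (simp add: partial_I_integrand_def)
  moreover have "EU_density c j N t =
      t ^ (j - 1) / fact (j - 1) * (\<Sum>k\<in>{1..N}. c k ^ j * exp (- c k * t) * (\<Prod>i\<in>{1..N} - {k}. ?\<phi> i))"
    unfolding EU_density_def sum_distrib_left erlang_density_eq[OF less_imp_le[OF t]]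
    using t by (intro sum.cong refl) simp
  ultimately show ?thesis by simp
qed

end

section \<open>A dominating function\<close>

definition dominating_term :: "(nat \<Rightarrow> real) \<Rightarrow> nat \<Rightarrow> nat \<Rightarrow> real \<Rightarrow> real" where
  "dominating_term c j k t = erlang_density (j - 1) (c k) t * (\<Prod>i\<in>{1..<k}. 1 - exp (- c i * t))"

definition dominating_fun :: "(nat \<Rightarrow> real) \<Rightarrow> nat \<Rightarrow> real \<Rightarrow> real" where
  "dominating_fun c j t = (\<Sum>k. dominating_term c j (Suc k) t)"

definition dominating_term_bound :: "(nat \<Rightarrow> real) \<Rightarrow> nat \<Rightarrow> nat \<Rightarrow> real" where
  "dominating_term_bound c j m = (\<Prod>i\<in>{1..m}. c i) * fact (j - 1 + m) / (fact (j - 1) * c (Suc m) ^ m)"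

lemma dominating_term_measurable [measurable]: "dominating_term c j k \<in> borel_measurable borel"
  unfolding dominating_term_def by measurable

context coupon_weights
begin

lemma dominating_term_nonneg: "0 \<le> dominating_term c j k t"
  using prod_one_minus_exp_neg_bounds(1) weights_pos[of k]
  by (cases "0 \<le> t") (simp_all add: dominating_term_def erlang_density_def)

lemma dominating_term_le_erlang_density: "dominating_term c j k t \<le> erlang_density (j - 1) (c k) t"
proof (cases "0 \<le> t")
  case True
  thus ?thesis using prod_one_minus_exp_neg_bounds[OF True, of "{1..<k}"] weights_pos[of k]
    by (simp add: dominating_term_def mult_left_le)
qed (simp add: dominating_term_def erlang_density_def)

lemma EU_density_le_sum_dominating_term:
  "EU_density c j N t \<le> (\<Sum>k<N. dominating_term c j (Suc k) t)"
proof (cases "0 \<le> t")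
  case True
  have "erlang_density (j - 1) (c k) t * (\<Prod>i\<in>{1..N} - {k}. 1 - exp (- c i * t)) \<le> dominating_term c j k t"
    if k: "k \<in> {1..N}" for k
  proof -
    have "{1..<k} \<subseteq> {1..N} - {k}" using k by auto
    hence "(\<Prod>i\<in>{1..N} - {k}. 1 - exp (- c i * t)) =
        (\<Prod>i\<in>{1..N} - {k} - {1..<k}. 1 - exp (- c i * t)) * (\<Prod>i\<in>{1..<k}. 1 - exp (- c i * t))"
      by (intro prod.subset_diff) auto
    also have "\<dots> \<le> (\<Prod>i\<in>{1..<k}. 1 - exp (- c i * t))"
      using prod_one_minus_exp_neg_bounds[OF True] by (intro mult_left_le_one_le) auto
    finally show ?thesis
      unfolding dominating_term_def using weights_pos[of k] by (intro mult_left_mono) simp_all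
  qed
  hence "(\<Sum>k\<in>{1..N}. erlang_density (j - 1) (c k) t * (\<Prod>i\<in>{1..N} - {k}. 1 - exp (- c i * t)))
      \<le> (\<Sum>k\<in>{1..N}. dominating_term c j k t)"
    by (rule sum_mono)
  hence "EU_density c j N t \<le> (\<Sum>k\<in>{1..N}. dominating_term c j k t)"
    unfolding EU_density_def using True by simp
  thus ?thesis by (simp add: sum.atLeast1_atMost_eq)
qed (simp add: EU_density_def dominating_term_nonneg sum_nonneg)

lemma EU_density_nonneg: "0 \<le> EU_density c j N t"
proof (cases "0 \<le> t")
  case True
  have "0 \<le> erlang_density (j - 1) (c k) t" for k using weights_pos[of k] by simp
  thus ?thesis
    unfolding EU_density_def using prod_one_minus_exp_neg_bounds(1)[OF True]
    by (auto intro!: sum_nonneg mult_nonneg_nonneg)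
qed (simp add: EU_density_def)

lemma dominating_term_le:
  "dominating_term c j (Suc m) t \<le> (\<Prod>i\<in>{1..m}. c i) * (erlang_density (j - 1) (c (Suc m)) t * t ^ m)"
proof (cases "0 \<le> t")
  case True
  have "(\<Prod>i\<in>{1..<Suc m}. 1 - exp (- c i * t)) \<le> (\<Prod>i\<in>{1..<Suc m}. c i * t)"
    using weights_pos True one_minus_exp_neg_le by (intro prod_mono) (auto simp: less_imp_le)
  also have "\<dots> = (\<Prod>i\<in>{1..m}. c i) * t ^ m"
    by (simp add: prod.distrib atLeastLessThanSuc_atLeastAtMost)
  finally show ?thesis
    unfolding dominating_term_def using weights_pos[of "Suc m"]
    by (subst mult.left_commute) (intro mult_left_mono, auto)
qed (simp add: dominating_term_def erlang_density_def)

lemma nn_integral_dominating_term_le: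
  "(\<integral>\<^sup>+ t. ennreal (dominating_term c j (Suc m) t) \<partial>lborel) \<le> ennreal (dominating_term_bound c j m)"
proof -
  let ?C = "\<Prod>i\<in>{1..m}. c i"
  have C: "0 \<le> ?C" using weights_pos by (intro prod_nonneg) (auto intro: less_imp_le)
  have "(\<integral>\<^sup>+ t. ennreal (dominating_term c j (Suc m) t) \<partial>lborel) \<le>
        (\<integral>\<^sup>+ t. ennreal ?C * ennreal (erlang_density (j - 1) (c (Suc m)) t * t ^ m) \<partial>lborel)"
  proof (rule nn_integral_mono)
    fix t :: real
    have "0 \<le> erlang_density (j - 1) (c (Suc m)) t * t ^ m"
      using weights_pos[of "Suc m"] by (cases "0 \<le> t") (auto simp: erlang_density_def)
    thus "ennreal (dominating_term c j (Suc m) t) \<le>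
        ennreal ?C * ennreal (erlang_density (j - 1) (c (Suc m)) t * t ^ m)"
      using dominating_term_le[of m t] C by (simp add: ennreal_mult'[symmetric] ennreal_leI)
  qed
  also have "\<dots> = ennreal ?C * (\<integral>\<^sup>+ t. ennreal (erlang_density (j - 1) (c (Suc m)) t * t ^ m) \<partial>lborel)"
    by (rule nn_integral_cmult) measurable
  also have "\<dots> = ennreal ?C * ennreal (fact (j - 1 + m) / (fact (j - 1) * c (Suc m) ^ m))"
    using nn_integral_erlang_ith_moment[OF weights_pos[of "Suc m"], of "j - 1" m] weights_pos[of "Suc m"]
    by (simp add: divide_ennreal ennreal_mult'' ennreal_of_nat_eq_real_of_nat)
  also have "\<dots> = ennreal (dominating_term_bound c j m)"
    unfolding dominating_term_bound_def using C weights_pos[of "Suc m"]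
    by (simp add: ennreal_mult'[symmetric] mult_ac)
  finally show ?thesis .
qed

lemma dominating_term_bound_pos: "0 < dominating_term_bound c j m"
  unfolding dominating_term_bound_def using weights_pos by (intro divide_pos_pos mult_pos_pos prod_pos) auto

lemma dominating_term_bound_Suc:
  "dominating_term_bound c j (Suc m) =
     dominating_term_bound c j m * (real (j + m) * (c (Suc m) / c (Suc (Suc m))) ^ Suc m)"
proof -
  have "j - 1 + Suc m = Suc (j - 1 + m)" and "real (Suc (j - 1 + m)) = real (j + m)"
    using two_le_j by simp_all
  hence fact_eq: "fact (j - 1 + Suc m) = real (j + m) * fact (j - 1 + m)"
    by (simp only: fact_Suc)
  have prod_eq: "(\<Prod>i\<in>{1..Suc m}. c i) = (\<Prod>i\<in>{1..m}. c i) * c (Suc m)"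
    by simp
  show ?thesis
    unfolding dominating_term_bound_def fact_eq prod_eq
    using weights_pos[of "Suc m"] weights_pos[of "Suc (Suc m)"]
    by (simp add: field_simps power_divide)
qed

end

locale summable_coupon_weights = coupon_weights +
  assumes summable_inverse_weights: "summable (\<lambda>k. 1 / c (Suc k))"
begin

lemma summable_weights_power_mult_exp_neg:
  "0 < t \<Longrightarrow> summable (\<lambda>k. c (Suc k) ^ m * exp (- c (Suc k) * t))"
  using summable_power_mult_exp_neg[of "\<lambda>k. c (Suc k)"] weights_pos summable_inverse_weights by blast

lemma summable_powr_weights:
  assumes "0 < x" "x < 1"
  shows "summable (\<lambda>k. x powr c (Suc k))"
  using summable_weights_power_mult_exp_neg[of "- ln x" 0] assms by (simp add: powr_def mult.commute)

lemma L_summand_le: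
  assumes s: "0 < s"
  shows "c k ^ j * exp (- s) powr c k / (1 - exp (- s) powr c k)
    \<le> c k ^ (j - 1) * exp (- c k * s) / s + c k ^ j * exp (- c k * s)"
proof -
  have ck: "0 < c k" by (rule weights_pos)
  hence cs: "0 < c k * s" using s by simp
  have "c k ^ j * exp (- s) powr c k / (1 - exp (- s) powr c k) =
      c k ^ j * exp (- (c k * s)) * (1 / (1 - exp (- (c k * s))))"
    by (simp add: powr_def)
  also have "\<dots> \<le> c k ^ j * exp (- (c k * s)) * ((1 + c k * s) / (c k * s))"
    using ck by (intro mult_left_mono inverse_one_minus_exp_neg_le cs) auto
  also have "\<dots> = c k ^ j / c k * exp (- (c k * s)) / s + c k ^ j * exp (- (c k * s))"
    using ck s by (simp add: field_simps)
  also have "c k ^ j / c k = c k ^ (j - 1)"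
    using ck two_le_j by (simp add: power_diff)
  finally show ?thesis by simp
qed

lemma partial_I_integrand_tendsto:
  assumes x: "0 < x" "x < 1"
  shows "(\<lambda>N. partial_I_integrand c j N x) \<longlonglongrightarrow> I_integrand c j x"
proof -
  define s where "s = - ln x"
  have s: "0 < s" and x_eq: "x = exp (- s)" using x by (simp_all add: s_def)
  have powr_less_1: "x powr c k < 1" for k
    using powr_less_mono2[of "c k" x 1] weights_pos[of k] x by simp
  have summable_L: "summable (\<lambda>k. c (Suc k) ^ j * x powr c (Suc k) / (1 - x powr c (Suc k)))"
  proof (rule summable_comparison_test')
    show "summable (\<lambda>k. c (Suc k) ^ (j - 1) * exp (- c (Suc k) * s) / s
        + c (Suc k) ^ j * exp (- c (Suc k) * s))"
      by (intro summable_add summable_divide summable_weights_power_mult_exp_neg s)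
    have "0 \<le> c (Suc k) ^ j * x powr c (Suc k) / (1 - x powr c (Suc k))" for k
      using weights_pos[of "Suc k"] powr_less_1[of "Suc k"] by simp
    hence norm_eq: "norm (c (Suc k) ^ j * x powr c (Suc k) / (1 - x powr c (Suc k)))
        = c (Suc k) ^ j * x powr c (Suc k) / (1 - x powr c (Suc k))" for k
      unfolding real_norm_def by (rule abs_of_nonneg)
    show "norm (c (Suc k) ^ j * x powr c (Suc k) / (1 - x powr c (Suc k)))
        \<le> c (Suc k) ^ (j - 1) * exp (- c (Suc k) * s) / s + c (Suc k) ^ j * exp (- c (Suc k) * s)" for k
      unfolding norm_eq using L_summand_le[OF s, of "Suc k"] by (simp only: x_eq)
  qed
  have "convergent_prod (\<lambda>k. 1 + - (x powr c (Suc k)))"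
  proof (rule summable_imp_convergent_prod_real)
    show "summable (\<lambda>k. \<bar>- (x powr c (Suc k))\<bar>)" using summable_powr_weights[OF x] by simp
    show "- (x powr c (Suc k)) \<noteq> -1" for k using powr_less_1[of "Suc k"] by simp
  qed
  hence "(\<lambda>n. \<Prod>k\<le>n. 1 - x powr c (Suc k)) \<longlonglongrightarrow> F_fun x c"
    unfolding F_fun_def by (simp add: convergent_prod_LIMSEQ)
  hence "(\<lambda>n. \<Prod>k<Suc n. 1 - x powr c (Suc k)) \<longlonglongrightarrow> F_fun x c"
    by (simp only: lessThan_Suc_atMost)
  hence F_lim: "(\<lambda>N. \<Prod>k<N. 1 - x powr c (Suc k)) \<longlonglongrightarrow> F_fun x c"
    by (rule LIMSEQ_imp_Suc)
  have L_lim: "(\<lambda>N. \<Sum>k<N. c (Suc k) ^ j * x powr c (Suc k) / (1 - x powr c (Suc k))) \<longlonglongrightarrow> L_fun x c j"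
    unfolding L_fun_def by (rule summable_LIMSEQ[OF summable_L])
  show ?thesis
    unfolding partial_I_integrand_def I_integrand_def
    by (intro tendsto_divide tendsto_mult L_lim F_lim tendsto_const) (use x in simp)
qed

lemma x_alpha_eq_1: "x_alpha c = 1"
proof -
  have "{x \<in> {0..1}. \<not> summable (\<lambda>k. x powr c (Suc k))} = {1}"
  proof (intro equalityI subsetI)
    fix x assume "x \<in> {x \<in> {0..1}. \<not> summable (\<lambda>k. x powr c (Suc k))}"
    thus "x \<in> {1}"
      using summable_powr_weights[of x] by (cases "x = 0") (auto simp: less_le)
  qed (simp add: summable_const_iff)
  thus ?thesis unfolding x_alpha_def by simp
qed

lemma EU_density_tendsto: "(\<lambda>N. EU_density c j N t) \<longlonglongrightarrow> EU_limit_density c j t"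
proof (cases "0 < t")
  case True
  have "(\<lambda>N. partial_I_integrand c j N (exp (- t))) \<longlonglongrightarrow> I_integrand c j (exp (- t))"
    using True by (intro partial_I_integrand_tendsto) simp_all
  hence "(\<lambda>N. partial_I_integrand c j N (exp (- t)) * exp (- t) / fact (j - 1))
      \<longlonglongrightarrow> I_integrand c j (exp (- t)) * exp (- t) / fact (j - 1)"
    by (intro tendsto_divide tendsto_mult_right tendsto_const) simp_all
  thus ?thesis
    unfolding EU_density_eq_partial_I_integrand[OF True] EU_limit_density_def using True by simp
next
  case False
  hence "EU_density c j N t = 0" for N
    using erlang_density_at_0 by (cases "t = 0") (auto simp: EU_density_def)
  thus ?thesis using False by (simp add: EU_limit_density_def)
qed

lemma EU_limit_density_measurable: "EU_limit_density c j \<in> borel_measurable lborel"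
  by (rule borel_measurable_LIMSEQ_real[OF EU_density_tendsto]) simp

lemma summable_dominating_term: "summable (\<lambda>k. dominating_term c j (Suc k) t)"
proof (cases "0 < t")
  case True
  show ?thesis
  proof (rule summable_comparison_test')
    show "summable (\<lambda>k. t ^ (j - 1) / fact (j - 1) * (c (Suc k) ^ j * exp (- c (Suc k) * t)))"
      by (intro summable_mult summable_weights_power_mult_exp_neg True)
    show "norm (dominating_term c j (Suc k) t)
        \<le> t ^ (j - 1) / fact (j - 1) * (c (Suc k) ^ j * exp (- c (Suc k) * t))" for k
      using dominating_term_nonneg[of "Suc k" t] dominating_term_le_erlang_density[of "Suc k" t]
        erlang_density_eq[of t "c (Suc k)"] True
      by (simp add: mult_ac)
  qed
next
  case False
  hence "dominating_term c j (Suc k) t = 0" for k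
    using erlang_density_at_0 by (cases "t = 0") (auto simp: dominating_term_def erlang_density_def)
  thus ?thesis by simp
qed

lemma norm_EU_density_le_dominating_fun: "norm (EU_density c j N t) \<le> dominating_fun c j t"
proof -
  have "EU_density c j N t \<le> (\<Sum>k<N. dominating_term c j (Suc k) t)"
    by (rule EU_density_le_sum_dominating_term)
  also have "\<dots> \<le> dominating_fun c j t"
    unfolding dominating_fun_def
    by (intro sum_le_suminf summable_dominating_term) (auto intro: dominating_term_nonneg)
  finally show ?thesis using EU_density_nonneg by simp
qed

lemma dominating_fun_measurable: "dominating_fun c j \<in> borel_measurable lborel"
  unfolding dominating_fun_def
  by (rule borel_measurable_LIMSEQ_real[OF summable_LIMSEQ[OF summable_dominating_term]]) simp

end

locale fast_growing_coupon_weights = summable_coupon_weights +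
  assumes ratio_tendsto_0: "(\<lambda>k. real (j + k) * (c k / c (Suc k)) ^ k) \<longlonglongrightarrow> 0"
begin

lemma summable_dominating_term_bound: "summable (dominating_term_bound c j)"
proof -
  obtain K where K: "\<And>k. K \<le> k \<Longrightarrow> real (j + k) * (c k / c (Suc k)) ^ k < 1/2"
    using order_tendstoD(2)[OF ratio_tendsto_0, of "1/2"] by (auto simp: eventually_sequentially)
  show ?thesis
  proof (rule summable_ratio_test[of "1/2" K])
    fix m assume m: "K \<le> m"
    have "real (j + m) * (c (Suc m) / c (Suc (Suc m))) ^ Suc m
        \<le> real (j + Suc m) * (c (Suc m) / c (Suc (Suc m))) ^ Suc m"
      using weights_pos[of "Suc m"] weights_pos[of "Suc (Suc m)"] by (intro mult_right_mono) simp_all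
    also have "\<dots> < 1/2" using K[of "Suc m"] m by simp
    finally have "dominating_term_bound c j (Suc m) \<le> dominating_term_bound c j m * (1/2)"
      unfolding dominating_term_bound_Suc[of m] using dominating_term_bound_pos[of m]
      by (intro mult_left_mono) auto
    thus "norm (dominating_term_bound c j (Suc m)) \<le> 1/2 * norm (dominating_term_bound c j m)"
      using dominating_term_bound_pos[of m] dominating_term_bound_pos[of "Suc m"] by simp
  qed simp
qed

lemma integrable_dominating_fun: "integrable lborel (dominating_fun c j)"
proof (rule integrableI_nonneg)
  show "AE t in lborel. 0 \<le> dominating_fun c j t"
    unfolding dominating_fun_def
    by (intro AE_I2 suminf_nonneg summable_dominating_term dominating_term_nonneg)
  have "(\<integral>\<^sup>+ t. ennreal (dominating_fun c j t) \<partial>lborel)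
      = (\<integral>\<^sup>+ t. (\<Sum>k. ennreal (dominating_term c j (Suc k) t)) \<partial>lborel)"
    unfolding dominating_fun_def
    by (intro nn_integral_cong suminf_ennreal2[symmetric] dominating_term_nonneg summable_dominating_term)
  also have "\<dots> = (\<Sum>k. \<integral>\<^sup>+ t. ennreal (dominating_term c j (Suc k) t) \<partial>lborel)"
    by (rule nn_integral_suminf) measurable
  also have "\<dots> \<le> (\<Sum>k. ennreal (dominating_term_bound c j k))"
    by (intro suminf_le nn_integral_dominating_term_le) auto
  also have "\<dots> = ennreal (suminf (dominating_term_bound c j))"
    by (intro suminf_ennreal2 summable_dominating_term_bound less_imp_le[OF dominating_term_bound_pos])
  finally show "(\<integral>\<^sup>+ t. ennreal (dominating_fun c j t) \<partial>lborel) < \<infinity>"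
    by (simp add: le_less_trans)
qed (rule dominating_fun_measurable)

lemma
  shows integrable_EU_limit_density: "integrable lborel (EU_limit_density c j)"
    and EU_tendsto_integral_EU_limit_density:
      "(\<lambda>N. EU c N j) \<longlonglongrightarrow> integral\<^sup>L lborel (EU_limit_density c j)"
proof -
  have lim: "AE t in lborel. (\<lambda>N. EU_density c j N t) \<longlonglongrightarrow> EU_limit_density c j t"
    by (intro AE_I2 EU_density_tendsto)
  have bound: "AE t in lborel. norm (EU_density c j N t) \<le> dominating_fun c j t" for N
    by (intro AE_I2 norm_EU_density_le_dominating_fun)
  show "integrable lborel (EU_limit_density c j)"
    by (rule integrable_dominated_convergence[OF EU_limit_density_measurable _ integrable_dominating_fun
          lim bound])
      simp
  show "(\<lambda>N. EU c N j) \<longlonglongrightarrow> integral\<^sup>L lborel (EU_limit_density c j)"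
    unfolding EU_eq_integral_EU_density
    by (rule integral_dominated_convergence[OF EU_limit_density_measurable _ integrable_dominating_fun
          lim bound])
      simp
qed

lemma
  shows set_integrable_I_integrand: "set_integrable lborel {0<..<1} (I_integrand c j)"
    and integral_I_integrand:
      "(LINT x:{0<..<1}|lborel. I_integrand c j x) = fact (j - 1) * integral\<^sup>L lborel (EU_limit_density c j)"
proof -
  have substituted_eq: "indicator {0<..} t * (exp (- t) * I_integrand c j (exp (- t)))
      = fact (j - 1) * EU_limit_density c j t" for t
    by (simp add: EU_limit_density_def)
  have "set_integrable lborel {0<..} (\<lambda>t. exp (- t) * I_integrand c j (exp (- t)))"
    unfolding set_integrable_def using integrable_EU_limit_density by (simp add: substituted_eq)
  moreover have "(\<lambda>x. indicator {0<..<1} x * I_integrand c j x) \<in> borel_measurable lborel"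
  proof (rule borel_measurable_LIMSEQ_real)
    show "(\<lambda>N. indicator {0<..<1} x * partial_I_integrand c j N x)
        \<longlonglongrightarrow> indicator {0<..<1} x * I_integrand c j x"
      for x :: real
      by (cases "x \<in> {0<..<1}") (simp_all add: partial_I_integrand_tendsto)
  qed simp
  ultimately show "set_integrable lborel {0<..<1} (I_integrand c j)"
    and "(LINT x:{0<..<1}|lborel. I_integrand c j x) = fact (j - 1) * integral\<^sup>L lborel (EU_limit_density c j)"
    using set_integrable_exp_neg_subst set_integral_exp_neg_subst
    by (simp_all add: set_lebesgue_integral_def substituted_eq)
qed

theorem I_finite_and_EU_tendsto_I_fun: "I_finite c j \<and> (\<lambda>N. EU c N j) \<longlonglongrightarrow> I_fun c j"
proof
  show "I_finite c j"
    unfolding I_finite_def x_alpha_eq_1 by (rule set_integrable_I_integrand)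
  have "I_fun c j = integral\<^sup>L lborel (EU_limit_density c j)"
    unfolding I_fun_def x_alpha_eq_1 integral_I_integrand by simp
  thus "(\<lambda>N. EU c N j) \<longlonglongrightarrow> I_fun c j"
    using EU_tendsto_integral_EU_limit_density by simp
qed

end

section \<open>The weights exp(p k^q) and k!\<close>

lemma powr_Suc_diff_ge:
  fixes x q :: real assumes x: "0 < x" and q: "0 < q"
  shows "q * x powr q / (x + 1) \<le> (x + 1) powr q - x powr q"
proof -
  have "ln (x / (x + 1)) \<le> x / (x + 1) - 1" by (rule ln_le_minus_one) (use x in simp)
  moreover have "ln (x / (x + 1)) = - ln (1 + 1/x)" and "x / (x + 1) - 1 = - (1 / (x + 1))"
    using x by (simp_all add: ln_div field_simps)
  ultimately have "1 / (x + 1) \<le> ln (1 + 1/x)" by simp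
  hence "1 + q / (x + 1) \<le> 1 + q * ln (1 + 1/x)"
    using mult_left_mono[of "1 / (x + 1)" _ q] q by simp
  also have "\<dots> \<le> (1 + 1/x) powr q"
    using exp_ge_add_one_self[of "q * ln (1 + 1/x)"] x
    by (simp add: powr_def add_pos_pos mult.commute less_imp_neq[symmetric])
  finally have "x powr q * (1 + q / (x + 1)) \<le> x powr q * (1 + 1/x) powr q"
    by (simp add: mult_left_mono)
  also have "\<dots> = (x * (1 + 1/x)) powr q"
    using x by (simp add: powr_mult add_pos_pos)
  also have "x * (1 + 1/x) = x + 1"
    using x by (simp add: field_simps)
  finally show ?thesis by (simp add: field_simps)
qed

lemma summable_inverse_exp_powr:
  fixes p q :: real assumes "0 < p" "0 < q"
  shows "summable (\<lambda>k. 1 / exp (p * real (Suc k) powr q))"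
proof -
  have "(\<lambda>k::nat. exp (- p * real k powr q)) \<in> O(\<lambda>k. 1 / real k ^ 2)"
    using assms by real_asymp
  hence "summable (\<lambda>k::nat. exp (- p * real k powr q))"
    by (rule summable_comparison_test_bigo[rotated])
      (use inverse_power_summable[of 2] in \<open>simp add: inverse_eq_divide\<close>)
  thus ?thesis
    using summable_ignore_initial_segment[of _ 1] by (fastforce simp: exp_minus inverse_eq_divide)
qed

lemma exp_powr_ratio_tendsto_0:
  fixes p q :: real assumes p: "0 < p" and q: "0 < q"
  shows "(\<lambda>k. real (j + k) * (exp (p * real k powr q) / exp (p * real (Suc k) powr q)) ^ k) \<longlonglongrightarrow> 0"
proof (rule tendsto_sandwich[OF _ _ tendsto_const])
  show "(\<lambda>k::nat. real (j + k) * exp (- (p * q) * (real k * real k powr q / (real k + 1)))) \<longlonglongrightarrow> 0"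
    using p q by real_asymp
  show "\<forall>\<^sub>F k in sequentially. 0 \<le> real (j + k) * (exp (p * real k powr q) / exp (p * real (Suc k) powr q)) ^ k"
    by simp
  show "\<forall>\<^sub>F k in sequentially. real (j + k) * (exp (p * real k powr q) / exp (p * real (Suc k) powr q)) ^ k
      \<le> real (j + k) * exp (- (p * q) * (real k * real k powr q / (real k + 1)))"
  proof (rule eventually_sequentiallyI[of 1])
    fix k :: nat assume "1 \<le> k"
    hence "p * real k * (q * real k powr q / (real k + 1)) \<le> p * real k * (real (Suc k) powr q - real k powr q)"
      using powr_Suc_diff_ge[of "real k" q] p q by (intro mult_left_mono) (simp_all add: add.commute)
    hence "(exp (p * real k powr q) / exp (p * real (Suc k) powr q)) ^ k
        \<le> exp (- (p * q) * (real k * real k powr q / (real k + 1)))"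
      by (simp add: exp_of_nat_mult[symmetric] exp_diff[symmetric] algebra_simps)
    thus "real (j + k) * (exp (p * real k powr q) / exp (p * real (Suc k) powr q)) ^ k
        \<le> real (j + k) * exp (- (p * q) * (real k * real k powr q / (real k + 1)))"
      by (intro mult_left_mono) auto
  qed
qed

lemma summable_inverse_fact: "summable (\<lambda>k. 1 / (fact (Suc k) :: real))"
  using summable_exp_generic[of "1::real"] summable_ignore_initial_segment[of _ 1]
  by (fastforce simp: divide_inverse)

lemma fact_ratio_tendsto_0: "(\<lambda>k. real (j + k) * ((fact k :: real) / fact (Suc k)) ^ k) \<longlonglongrightarrow> 0"
proof (rule tendsto_sandwich[OF _ _ tendsto_const])
  show "(\<lambda>k::nat. real (j + k) / (real k + 1) ^ 2) \<longlonglongrightarrow> 0" by real_asymp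
  show "\<forall>\<^sub>F k in sequentially. 0 \<le> real (j + k) * ((fact k :: real) / fact (Suc k)) ^ k" by simp
  show "\<forall>\<^sub>F k in sequentially.
      real (j + k) * ((fact k :: real) / fact (Suc k)) ^ k \<le> real (j + k) / (real k + 1) ^ 2"
  proof (rule eventually_sequentiallyI[of 2])
    fix k :: nat assume k: "2 \<le> k"
    have "((fact k :: real) / fact (Suc k)) ^ k = 1 / (real k + 1) ^ k"
      by (simp add: fact_Suc add.commute power_one_over)
    also have "\<dots> \<le> 1 / (real k + 1) ^ 2"
      by (intro divide_left_mono power_increasing) (use k in auto)
    finally have "((fact k :: real) / fact (Suc k)) ^ k \<le> 1 / (real k + 1) ^ 2" .
    thus "real (j + k) * ((fact k :: real) / fact (Suc k)) ^ k \<le> real (j + k) / (real k + 1) ^ 2"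
      using mult_left_mono[of _ _ "real (j + k)"] by fastforce
  qed
qed

lemma fast_growing_coupon_weights_exp_powr:
  fixes p q :: real assumes "0 < p" "0 < q" "2 \<le> j"
  shows "fast_growing_coupon_weights (\<lambda>k. exp (p * real k powr q)) j"
  by unfold_locales (use assms summable_inverse_exp_powr exp_powr_ratio_tendsto_0 in auto)

lemma fast_growing_coupon_weights_fact: "2 \<le> j \<Longrightarrow> fast_growing_coupon_weights (\<lambda>k. fact k :: real) j"
  by unfold_locales (use summable_inverse_fact fact_ratio_tendsto_0 in auto)

section \<open>Scaling and reversing the weights\<close>

lemma EU_cong: "(\<And>k. k \<in> {1..N} \<Longrightarrow> c k = d k) \<Longrightarrow> EU c N j = EU d N j"
  unfolding EU_def by (intro sum.cong refl arg_cong[where f = "set_lebesgue_integral _ _"] ext prod.cong) auto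

lemma EU_mult_weights:
  assumes lam: "0 < lam"
  shows "EU (\<lambda>k. lam * c k) N j = EU c N j"
  unfolding EU_def
proof (rule sum.cong[OF refl])
  fix k
  define T where "T c t = c k * exp (- c k * t) * (c k * t) ^ (j - 1) / fact (j - 1) *
      (\<Prod>i\<in>{1..N} - {k}. 1 - exp (- c i * t))" for c :: "nat \<Rightarrow> real" and t :: real
  have ind: "indicator {0..} (lam * x) = (indicator {0..} x :: real)" for x
    using lam by (simp add: indicator_def zero_le_mult_iff)
  have "(LINT t:{0..}|lborel. T c t) = integral\<^sup>L lborel (\<lambda>t. indicator {0..} t *\<^sub>R T c t)"
    by (simp add: set_lebesgue_integral_def)
  also have "\<dots> = \<bar>lam\<bar> *\<^sub>R integral\<^sup>L lborel (\<lambda>x. indicator {0..} (0 + lam * x) *\<^sub>R T c (0 + lam * x))"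
    by (rule lborel_integral_real_affine) (use lam in simp)
  also have "\<dots> = integral\<^sup>L lborel (\<lambda>x. lam * (indicator {0..} (lam * x) *\<^sub>R T c (lam * x)))"
    using lam by simp
  also have "\<dots> = integral\<^sup>L lborel (\<lambda>t. indicator {0..} t *\<^sub>R T (\<lambda>k. lam * c k) t)"
    unfolding ind by (intro Bochner_Integration.integral_cong) (simp_all add: T_def mult_ac)
  also have "\<dots> = (LINT t:{0..}|lborel. T (\<lambda>k. lam * c k) t)"
    by (simp add: set_lebesgue_integral_def)
  finally show "(LINT t:{0..}|lborel. T (\<lambda>k. lam * c k) t) = (LINT t:{0..}|lborel. T c t)" by simp
qed

lemma EU_reverse_weights: "EU (\<lambda>k. c (Suc N - k)) N j = EU c N j"
proof -
  have prod_reverse: "(\<Prod>i\<in>{1..N} - {Suc N - k}. g i) = (\<Prod>i\<in>{1..N} - {k}. g (Suc N - i))"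
    if "k \<in> {1..N}" for k and g :: "nat \<Rightarrow> real"
    by (rule prod.reindex_bij_witness[of _ "\<lambda>k. Suc N - k" "\<lambda>k. Suc N - k"]) (use that in auto)
  show ?thesis
    unfolding EU_def
    by (rule sum.reindex_bij_witness[of _ "\<lambda>k. Suc N - k" "\<lambda>k. Suc N - k"])
      (auto simp: prod_reverse[unfolded One_nat_def])
qed

lemma EU_exp_neg_linear: "EU (\<lambda>k. exp (- p * real k)) N j = EU (\<lambda>k. exp (p * real k)) N j"
proof -
  have "EU (\<lambda>k. exp (- p * real k)) N j = EU (\<lambda>k. exp (- p * real (Suc N)) * exp (p * real (Suc N - k))) N j"
    by (rule EU_cong) (simp add: of_nat_diff exp_add[symmetric] algebra_simps)
  also have "\<dots> = EU (\<lambda>k. exp (p * real (Suc N - k))) N j"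
    by (rule EU_mult_weights) simp
  also have "\<dots> = EU (\<lambda>k. exp (p * real k)) N j"
    by (rule EU_reverse_weights)
  finally show ?thesis .
qed

theorem mainTheorem13:
  shows
  "(\<forall>(p::real) (q::real). p > 0 \<longrightarrow> q > 0 \<longrightarrow>
      (\<forall>j::nat. j \<ge> 2 \<longrightarrow>
         (let a = (\<lambda>k::nat. exp (p * real k powr q)) in
            I_finite a j \<and> (\<lambda>N. EU a N j) \<longlonglongrightarrow> I_fun a j)))
   \<and> (\<forall>j::nat. j \<ge> 2 \<longrightarrow>
         (let a = (\<lambda>k::nat. fact k :: real) in
            I_finite a j \<and> (\<lambda>N. EU a N j) \<longlonglongrightarrow> I_fun a j))
   \<and> (\<forall>p::real. p > 0 \<longrightarrow>
      (\<forall>j::nat. j \<ge> 2 \<longrightarrow>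
         (let b = (\<lambda>k::nat. exp (- p * real k)); a = (\<lambda>k::nat. exp (p * real k)) in
            I_finite a j \<and> (\<lambda>N. EU b N j) \<longlonglongrightarrow> I_fun a j)))"
proof (intro conjI allI impI)
  fix p q :: real and j :: nat
  assume "p > 0" "q > 0" "j \<ge> 2"
  thus "let a = (\<lambda>k::nat. exp (p * real k powr q)) in I_finite a j \<and> (\<lambda>N. EU a N j) \<longlonglongrightarrow> I_fun a j"
    using fast_growing_coupon_weights.I_finite_and_EU_tendsto_I_fun[OF fast_growing_coupon_weights_exp_powr]
    by simp
next
  fix j :: nat assume "j \<ge> 2"
  thus "let a = (\<lambda>k::nat. fact k :: real) in I_finite a j \<and> (\<lambda>N. EU a N j) \<longlonglongrightarrow> I_fun a j"
    using fast_growing_coupon_weights.I_finite_and_EU_tendsto_I_fun[OF fast_growing_coupon_weights_fact]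
    by simp
next
  fix p :: real and j :: nat
  assume "p > 0" "j \<ge> 2"
  then have "fast_growing_coupon_weights (\<lambda>k. exp (p * real k)) j"
    using fast_growing_coupon_weights_exp_powr[of p 1 j] by simp
  thus "let b = (\<lambda>k::nat. exp (- p * real k)); a = (\<lambda>k::nat. exp (p * real k)) in
      I_finite a j \<and> (\<lambda>N. EU b N j) \<longlonglongrightarrow> I_fun a j"
    unfolding Let_def EU_exp_neg_linear by (rule fast_growing_coupon_weights.I_finite_and_EU_tendsto_I_fun)
qed

end
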